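(* For $d>0$ let $g_d$ be as in the context, let $h_d(x)=g_d(x)/\sqrt{1-x^2}$, $M(x)=e^{x/d}$, and $$c_2(d)=\frac{\int_0^\pi\cos\theta\,\sin^2\theta\,h_d(\cos\theta)M(\cos\theta)\sin\theta\,d\theta}{\int_0^\pi\sin^2\theta\,h_d(\cos\theta)M(\cos\theta)\sin\theta\,d\theta}.$$ Then $c_2(d)=\frac{1}{6d}+o\!\left(\frac1d\right)$ as $d\to+\infty$.
   Context: $g_d$ is the unique solution in $V=\{g:\ (1-x^2)^{-1/2}g\in L^2(-1,1),\ (1-x^2)^{1/2}\partial_xg\in L^2(-1,1)\}$ of $-(1-x^2)\partial_x[e^{x/d}(1-x^2)\partial_xg]+e^{x/d}g=-(1-x^2)^{3/2}e^{x/d}$ on $(-1,1)$ (this solution exists, is unique and is nonpositive). *)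

theory Defs
  imports "HOL-Analysis.Analysis" "HOL-Library.Landau_Symbols"
begin

text \<open>Classical formulation of the boundary value problem defining g_d.
  Weak solutions in V of this ODE (smooth coefficients on the open interval)
  are classical on (-1,1), and classical solutions lying in V are weak solutions,
  so this characterises the same function on (-1,1). Values outside (-1,1) are
  normalised to 0 to make the description unique.\<close>

definition gd_flux :: "real \<Rightarrow> (real \<Rightarrow> real) \<Rightarrow> real \<Rightarrow> real" where
  "gd_flux d g y = exp (y / d) * (1 - y\<^sup>2) * deriv g y"

definition is_gd :: "real \<Rightarrow> (real \<Rightarrow> real) \<Rightarrow> bool" where
  "is_gd d g \<longleftrightarrow>
     (\<forall>x. x \<notin> {-1<..<1} \<longrightarrow> g x = 0) \<and>
     (\<lambda>x. (g x)\<^sup>2 / (1 - x\<^sup>2)) integrable_on {-1<..<1} \<and>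
     (\<lambda>x. (1 - x\<^sup>2) * (deriv g x)\<^sup>2) integrable_on {-1<..<1} \<and>
     (\<forall>x\<in>{-1<..<1}.
        g differentiable (at x) \<and>
        gd_flux d g differentiable (at x) \<and>
        - (1 - x\<^sup>2) * deriv (gd_flux d g) x + exp (x / d) * g x
          = - ((1 - x\<^sup>2) powr (3/2)) * exp (x / d))"

definition gd :: "real \<Rightarrow> real \<Rightarrow> real" where
  "gd d = (THE g. is_gd d g)"

definition hd :: "real \<Rightarrow> real \<Rightarrow> real" where
  "hd d x = gd d x / sqrt (1 - x\<^sup>2)"

definition Mfun :: "real \<Rightarrow> real \<Rightarrow> real" where
  "Mfun d x = exp (x / d)"

definition c2 :: "real \<Rightarrow> real" where
  "c2 d =
     integral {0..pi} (\<lambda>\<theta>. cos \<theta> * (sin \<theta>)\<^sup>2 * hd d (cos \<theta>) * Mfun d (cos \<theta>) * sin \<theta>)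
   / integral {0..pi} (\<lambda>\<theta>. (sin \<theta>)\<^sup>2 * hd d (cos \<theta>) * Mfun d (cos \<theta>) * sin \<theta>)"

end

theory Submission
  imports Defs
begin

text \<open>
  Writing \<open>g = sqrt (1 - x\<^sup>2) * exp (- x / (2 * d)) * v\<close>, the boundary value
  problem defining \<open>g\<^sub>d\<close> becomes the fixed point equation \<open>v = green (source d v)\<close>.
  Here \<open>green\<close> is the Green operator of the problem
  \<open>- (1 - x\<^sup>2)\<^sup>-\<^sup>1 ((1 - x\<^sup>2)\<^sup>2 v')' + 2 v = f\<close> (it averages \<open>f\<close> against explicit kernels
  and satisfies \<open>\<bar>green f\<bar> \<le> sup \<bar>f\<bar> / 2\<close>), and \<open>source d v = - exp (x / (2 d)) + p\<^sub>d v\<close>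
  with a potential \<open>p\<^sub>d = O(1/d)\<close>.
\<close>

lemma fundamental_theorem_real:
  fixes F f :: "real \<Rightarrow> real"
  assumes "a \<le> b" and "\<And>x. x \<in> {a..b} \<Longrightarrow> (F has_real_derivative f x) (at x)"
  shows "(f has_integral (F b - F a)) {a..b}"
  using assms by (intro fundamental_theorem_of_calculus)
    (auto simp: has_real_derivative_iff_has_vector_derivative[symmetric]
          intro: has_field_derivative_at_within)

lemma one_minus_square_pos: "x \<in> {-1<..<(1::real)} \<Longrightarrow> 0 < 1 - x\<^sup>2"
  by (auto simp: abs_square_less_1)

lemma continuous_on_reflect:
  "continuous_on {-1..1} f \<Longrightarrow> continuous_on {-1..1} (\<lambda>y::real. f (- y))"
  by (rule continuous_on_compose2[of "{-1..1}" f]) (auto intro: continuous_intros)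

lemma has_real_derivative_interior:
  assumes "x \<in> {-1<..<1}" and "(F has_real_derivative D) (at x within {-1..1})"
  shows "(F has_real_derivative D) (at x)"
  using assms
  by (metis at_within_open greaterThanLessThan_subseteq_atLeastAtMost_iff
      has_field_derivative_subset open_greaterThanLessThan order_refl)

lemma continuous_on_bounded_interval:
  assumes "continuous_on {-1..1} (f :: real \<Rightarrow> real)"
  obtains B where "\<And>y. y \<in> {-1..1} \<Longrightarrow> \<bar>f y\<bar> \<le> B"
proof -
  have "compact (f ` {-1..1})" by (rule compact_continuous_image[OF assms]) simp
  then obtain B where "\<forall>z \<in> f ` {-1..1}. norm z \<le> B"
    using compact_imp_bounded bounded_iff by metis
  then show ?thesis using that by (metis atLeastAtMost_iff image_eqI real_norm_def)
qed

definition left_avg :: "(real \<Rightarrow> real) \<Rightarrow> real \<Rightarrow> real" where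
  "left_avg f x = integral {-1..x} (\<lambda>y. (1 + y) * f y) / (1 + x)"

definition right_avg :: "(real \<Rightarrow> real) \<Rightarrow> real \<Rightarrow> real" where
  "right_avg f x = left_avg (\<lambda>y. f (- y)) (- x)"

definition green :: "(real \<Rightarrow> real) \<Rightarrow> real \<Rightarrow> real" where
  "green f x = (left_avg f x + right_avg f x) / 2"

lemma left_moment_affine:
  fixes x a b :: real
  assumes "-1 \<le> x"
  shows "((\<lambda>y. (1 + y) * (a + b * y)) has_integral (1 + x)\<^sup>2 * (a / 2 + b * (2 * x - 1) / 6)) {-1..x}"
proof -
  define F where "F t = (a - b) * (1 + t)\<^sup>2 / 2 + b * (1 + t) ^ 3 / 3" for t
  have "((\<lambda>y. (1 + y) * (a + b * y)) has_integral F x - F (-1)) {-1..x}"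
    unfolding F_def by (rule fundamental_theorem_real[OF assms])
      (auto intro!: derivative_eq_intros simp: power2_eq_square power3_eq_cube field_simps)
  moreover have "F x - F (-1) = (1 + x)\<^sup>2 * (a / 2 + b * (2 * x - 1) / 6)"
    by (simp add: F_def power2_eq_square power3_eq_cube field_simps)
  ultimately show ?thesis by simp
qed

lemma left_avg_affine:
  fixes x a b :: real
  assumes "-1 \<le> x"
  shows "left_avg (\<lambda>y. a + b * y) x = (1 + x) * (a / 2 + b * (2 * x - 1) / 6)"
  using integral_unique[OF left_moment_affine[OF assms, of a b]]
  by (cases "x = -1") (simp_all add: left_avg_def power2_eq_square)

lemma left_avg_bound:
  assumes f: "continuous_on {-1..1} f" and B: "\<And>y. y \<in> {-1..1} \<Longrightarrow> \<bar>f y\<bar> \<le> B"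
    and x: "x \<in> {-1..1}"
  shows "\<bar>left_avg f x\<bar> \<le> B * (1 + x) / 2"
proof (cases "x = -1")
  case True
  then show ?thesis using B[of 0] by (simp add: left_avg_def)
next
  case False
  with x have pos: "1 + x > 0" by auto
  have sub: "{-1..x} \<subseteq> {-1..1}" using x by auto
  have lin: "((\<lambda>y. (1 + y) * B) has_integral (1 + x)\<^sup>2 * (B / 2)) {-1..x}"
    using left_moment_affine[of x B 0] x by simp
  have "\<bar>integral {-1..x} (\<lambda>y. (1 + y) * f y)\<bar> \<le> integral {-1..x} (\<lambda>y. (1 + y) * B)"
  proof (rule integral_norm_bound_integral[where 'a=real, simplified])
    show "(\<lambda>y. (1 + y) * f y) integrable_on {-1..x}"
      by (intro integrable_continuous_interval continuous_intros continuous_on_subset[OF f sub])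
    show "(\<lambda>y. (1 + y) * B) integrable_on {-1..x}" using lin by blast
    show "\<bar>(1 + y) * f y\<bar> \<le> (1 + y) * B" if "y \<in> {-1..x}" for y
      using that B[of y] sub by (auto simp: abs_mult intro!: mult_left_mono)
  qed
  also have "\<dots> = (1 + x)\<^sup>2 * (B / 2)" using lin by (rule integral_unique)
  finally show ?thesis
    using pos by (simp add: left_avg_def abs_div divide_simps power2_eq_square mult_ac)
qed

lemma right_avg_bound:
  assumes f: "continuous_on {-1..1} f" and B: "\<And>y. y \<in> {-1..1} \<Longrightarrow> \<bar>f y\<bar> \<le> B"
    and x: "x \<in> {-1..1}"
  shows "\<bar>right_avg f x\<bar> \<le> B * (1 - x) / 2"
  using left_avg_bound[OF continuous_on_reflect[OF f], of B "- x"] B x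
  by (simp add: right_avg_def)

(* The Green operator halves the sup-norm; this drives the contraction argument. *)
lemma green_bound:
  assumes f: "continuous_on {-1..1} f" and B: "\<And>y. y \<in> {-1..1} \<Longrightarrow> \<bar>f y\<bar> \<le> B"
    and x: "x \<in> {-1..1}"
  shows "\<bar>green f x\<bar> \<le> B / 2"
  using left_avg_bound[OF f B x] right_avg_bound[OF f B x]
  by (simp add: green_def field_simps)

lemma left_avg_continuous:
  assumes f: "continuous_on {-1..1} f"
  shows "continuous_on {-1..1} (left_avg f)"
  unfolding continuous_on_eq_continuous_within
proof
  fix x :: real assume x: "x \<in> {-1..1}"
  obtain B where B: "\<And>y. y \<in> {-1..1} \<Longrightarrow> \<bar>f y\<bar> \<le> B"
    using continuous_on_bounded_interval[OF f] by blast
  show "continuous (at x within {-1..1}) (left_avg f)"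
  proof (cases "x = -1")
    case True
    have "((\<lambda>y. B * (1 + y) / 2) \<longlongrightarrow> 0) (at x within {-1..1})"
      using True by (auto intro!: tendsto_eq_intros)
    moreover have "\<forall>\<^sub>F y in at x within {-1..1}. norm (left_avg f y) \<le> B * (1 + y) / 2"
      unfolding eventually_at_filter
      by (rule always_eventually) (use left_avg_bound[OF f B] in auto)
    ultimately have "(left_avg f \<longlongrightarrow> 0) (at x within {-1..1})"
      by (rule Lim_null_comparison[rotated])
    then show ?thesis using True by (simp add: continuous_within left_avg_def)
  next
    case False
    have "continuous_on {-1..1} (\<lambda>x. integral {-1..x} (\<lambda>y. (1 + y) * f y))"
      by (intro indefinite_integral_continuous_1 integrable_continuous_interval continuous_intros f)
    then have "continuous (at x within {-1..1}) (\<lambda>x. integral {-1..x} (\<lambda>y. (1 + y) * f y) / (1 + x))"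
      using x False by (intro continuous_intros) (auto simp: continuous_on_eq_continuous_within)
    then show ?thesis by (simp add: left_avg_def[abs_def])
  qed
qed

lemma right_avg_continuous:
  "continuous_on {-1..1} f \<Longrightarrow> continuous_on {-1..1} (right_avg f)"
  unfolding right_avg_def[abs_def]
  by (rule continuous_on_compose2[OF left_avg_continuous[OF continuous_on_reflect]
        continuous_on_minus[OF continuous_on_id]]) auto

lemma green_continuous:
  "continuous_on {-1..1} f \<Longrightarrow> continuous_on {-1..1} (green f)"
  unfolding green_def[abs_def]
  by (intro continuous_intros left_avg_continuous right_avg_continuous) auto

(* Derivatives of the averages in the interior; the term f x cancels in their sum. *)
lemma left_avg_deriv:
  assumes f: "continuous_on {-1..1} f" and x: "x \<in> {-1<..<1}"
  shows "(left_avg f has_real_derivative f x - left_avg f x / (1 + x)) (at x)"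
proof -
  let ?I = "\<lambda>x. integral {-1..x} (\<lambda>y. (1 + y) * f y)"
  have "(?I has_real_derivative (1 + x) * f x) (at x within {-1..1})"
    by (rule integral_has_real_derivative) (use x in \<open>auto intro!: continuous_intros f\<close>)
  then have "(?I has_real_derivative (1 + x) * f x) (at x)"
    by (rule has_real_derivative_interior[OF x])
  then have "((\<lambda>x. ?I x / (1 + x)) has_real_derivative
      ((1 + x) * f x * (1 + x) - ?I x * 1) / ((1 + x) * (1 + x))) (at x)"
    by (rule DERIV_divide) (use x in \<open>auto intro!: derivative_eq_intros\<close>)
  moreover have "((1 + x) * f x * (1 + x) - ?I x * 1) / ((1 + x) * (1 + x))
      = f x - left_avg f x / (1 + x)"
    using x by (simp add: left_avg_def diff_divide_distrib power2_eq_square)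
  ultimately show ?thesis by (simp add: left_avg_def[abs_def])
qed

lemma right_avg_deriv:
  assumes f: "continuous_on {-1..1} f" and x: "x \<in> {-1<..<1}"
  shows "(right_avg f has_real_derivative - f x + right_avg f x / (1 - x)) (at x)"
proof -
  have "((\<lambda>x. left_avg (\<lambda>y. f (- y)) (- x)) has_real_derivative
      (f x - right_avg f x / (1 - x)) * (- 1)) (at x)"
    using left_avg_deriv[OF continuous_on_reflect[OF f], of "- x"] x
    by (intro DERIV_chain2[where f = "left_avg (\<lambda>y. f (- y))"])
      (auto simp: right_avg_def intro!: derivative_eq_intros)
  then show ?thesis by (simp add: right_avg_def[abs_def])
qed

lemma left_avg_add:
  assumes f: "continuous_on {-1..1} f" and g: "continuous_on {-1..1} g" and x: "x \<in> {-1..1}"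
  shows "left_avg (\<lambda>y. f y + g y) x = left_avg f x + left_avg g x"
proof -
  have sub: "{-1..x} \<subseteq> {-1..1}" using x by auto
  have "(\<lambda>y. (1 + y) * f y) integrable_on {-1..x}" "(\<lambda>y. (1 + y) * g y) integrable_on {-1..x}"
    by (auto intro!: integrable_continuous_interval continuous_intros
        continuous_on_subset[OF f sub] continuous_on_subset[OF g sub])
  from integral_add[OF this] show ?thesis
    by (simp add: left_avg_def distrib_left add_divide_distrib)
qed

lemma green_add:
  assumes f: "continuous_on {-1..1} f" and g: "continuous_on {-1..1} g" and x: "x \<in> {-1..1}"
  shows "green (\<lambda>y. f y + g y) x = green f x + green g x"
  using left_avg_add[OF f g x]
    left_avg_add[OF continuous_on_reflect[OF f] continuous_on_reflect[OF g], of "- x"] x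
  by (simp add: green_def right_avg_def field_simps)

lemma green_cong:
  assumes "\<And>y. y \<in> {-1..1} \<Longrightarrow> f y = g y" and "x \<in> {-1..1}"
  shows "green f x = green g x"
proof -
  have "left_avg f x = left_avg g x"
    if "\<And>y. y \<in> {-1..1} \<Longrightarrow> f y = g y" "x \<in> {-1..1}" for f g :: "real \<Rightarrow> real" and x
    unfolding left_avg_def by (subst integral_cong[of _ _ "\<lambda>y. (1 + y) * g y"]) (use that in auto)
  from this[of f g x] this[of "\<lambda>y. f (- y)" "\<lambda>y. g (- y)" "- x"] show ?thesis
    using assms by (simp add: green_def right_avg_def)
qed

lemma green_affine:
  assumes "x \<in> {-1..1}"
  shows "green (\<lambda>y. a + b * y) x = a / 2 + b * x / 6"
  using left_avg_affine[of x a b] left_avg_affine[of "- x" a "- b"] assms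
  by (simp add: green_def right_avg_def field_simps)

definition halfexp :: "real \<Rightarrow> real \<Rightarrow> real" where
  "halfexp d x = exp (x / (2 * d))"

definition potential :: "real \<Rightarrow> real \<Rightarrow> real" where
  "potential d x = x / d - (1 - x\<^sup>2) / (4 * d\<^sup>2)"

definition source :: "real \<Rightarrow> (real \<Rightarrow> real) \<Rightarrow> real \<Rightarrow> real" where
  "source d u y = - halfexp d y + potential d y * u y"

definition clip :: "real \<Rightarrow> real" where
  "clip x = max (-1) (min 1 x)"

definition green_map :: "real \<Rightarrow> (real \<Rightarrow>\<^sub>C real) \<Rightarrow> (real \<Rightarrow>\<^sub>C real)" where
  "green_map d u = Bcontfun (\<lambda>x. green (source d u) (clip x))"

definition vsol :: "real \<Rightarrow> real \<Rightarrow> real" where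
  "vsol d = apply_bcontfun (THE u. green_map d u = u)"

(* The potential is O(1/d); for d \<ge> 2 it is at most 9/16, so the fixed point map
   contracts with constant 9/32. *)
lemma potential_bound:
  assumes d: "d \<ge> 2" and y: "y \<in> {-1..1}"
  shows "\<bar>potential d y\<bar> \<le> 9 / (8 * d)"
proof -
  have y2: "0 \<le> 1 - y\<^sup>2" "1 - y\<^sup>2 \<le> 1" using y by (auto simp: abs_square_le_1)
  have "y / d \<le> 1 / d" "- (1 / d) \<le> y / d" using y d by (auto simp: divide_simps)
  moreover have "(1 - y\<^sup>2) / (4 * d\<^sup>2) \<le> 1 / (4 * d\<^sup>2)" using y2 d by (intro divide_right_mono) auto
  moreover have "1 / (4 * d\<^sup>2) \<le> 1 / (8 * d)" using d by (simp add: divide_simps power2_eq_square)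
  moreover have "0 \<le> (1 - y\<^sup>2) / (4 * d\<^sup>2)" using y2 by simp
  moreover have "1 / d + 1 / (8 * d) = 9 / (8 * d)" using d by (simp add: field_simps)
  ultimately show ?thesis unfolding potential_def abs_le_iff by linarith
qed

lemma source_continuous: "continuous_on UNIV u \<Longrightarrow> continuous_on S (source d u)"
  unfolding source_def halfexp_def potential_def divide_inverse
  by (rule continuous_on_subset[of UNIV]) (intro continuous_intros, auto)

(* The fixed point map is well defined on bounded continuous functions; clipping to
   [-1,1] extends functions on the interval to the whole line. *)
lemma green_map_apply: "apply_bcontfun (green_map d u) x = green (source d u) (clip x)"
proof -
  have cs: "continuous_on {-1..1} (source d u)" by (rule source_continuous) simp
  obtain B where B: "\<And>y. y \<in> {-1..1} \<Longrightarrow> \<bar>source d u y\<bar> \<le> B"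
    using continuous_on_bounded_interval[OF cs] by blast
  have "(\<lambda>x. green (source d u) (clip x)) \<in> bcontfun"
  proof (rule bcontfun_normI)
    show "continuous_on UNIV (\<lambda>x. green (source d u) (clip x))"
      unfolding clip_def
      by (rule continuous_on_compose2[OF green_continuous[OF cs]]) (auto intro!: continuous_intros)
    show "norm (green (source d u) (clip x)) \<le> B / 2" for x
      using green_bound[OF cs B] by (simp add: clip_def)
  qed
  then show ?thesis unfolding green_map_def by (simp add: Bcontfun_inverse)
qed

lemma green_map_contraction:
  assumes d: "d \<ge> 2"
  shows "dist (green_map d u1) (green_map d u2) \<le> 9 / 32 * dist u1 u2"
proof (rule dist_bound)
  fix x
  define z where "z = clip x"
  have z: "z \<in> {-1..1}" by (auto simp: z_def clip_def)
  define H where "H y = potential d y * (apply_bcontfun u1 y - apply_bcontfun u2 y)" for y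
  have cH: "continuous_on {-1..1} H"
    unfolding H_def potential_def divide_inverse by (intro continuous_intros) auto
  have "green (source d u1) z = green (\<lambda>y. source d u2 y + H y) z"
    by (rule green_cong[OF _ z]) (simp add: source_def H_def algebra_simps)
  also have "\<dots> = green (source d u2) z + green H z"
    by (rule green_add[OF source_continuous cH z]) simp
  finally have diff: "green (source d u1) z - green (source d u2) z = green H z" by simp
  have "\<bar>H y\<bar> \<le> 9 / 16 * dist u1 u2" if y: "y \<in> {-1..1}" for y
  proof -
    have "9 / (8 * d) \<le> 9 / 16" using d by (simp add: divide_simps)
    then have "\<bar>potential d y\<bar> \<le> 9 / 16" using potential_bound[OF d y] by linarith
    then show ?thesis
      using dist_bounded[of u1 y u2] unfolding H_def abs_mult
      by (intro mult_mono) (auto simp: dist_real_def)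
  qed
  from green_bound[OF cH this z] diff
  show "dist (apply_bcontfun (green_map d u1) x) (apply_bcontfun (green_map d u2) x)
      \<le> 9 / 32 * dist u1 u2"
    by (simp add: green_map_apply z_def dist_real_def)
qed

lemma vsol_eq_green_clip:
  assumes d: "d \<ge> 2"
  shows "vsol d x = green (source d (vsol d)) (clip x)"
proof -
  have "\<exists>!u. green_map d u = u"
    using green_map_contraction[OF d] by (intro banach_fix_type[of "9/32"]) auto
  then have "green_map d (THE u. green_map d u = u) = (THE u. green_map d u = u)"
    by (rule theI')
  then show ?thesis unfolding vsol_def by (metis green_map_apply)
qed

lemma vsol_eq_green:
  "d \<ge> 2 \<Longrightarrow> x \<in> {-1..1} \<Longrightarrow> vsol d x = green (source d (vsol d)) x"
  using vsol_eq_green_clip[of d x] by (simp add: clip_def)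

lemma vsol_continuous: "continuous_on S (vsol d)"
  unfolding vsol_def by simp

lemma source_vsol_continuous: "continuous_on S (source d (vsol d))"
  by (rule source_continuous) (rule vsol_continuous)

definition vleft :: "real \<Rightarrow> real \<Rightarrow> real" where
  "vleft d = left_avg (source d (vsol d))"

definition vright :: "real \<Rightarrow> real \<Rightarrow> real" where
  "vright d = right_avg (source d (vsol d))"

definition gsol :: "real \<Rightarrow> real \<Rightarrow> real" where
  "gsol d x = (if x \<in> {-1<..<1} then sqrt (1 - x\<^sup>2) * exp (- x / (2 * d)) * vsol d x else 0)"

definition gsol_slope :: "real \<Rightarrow> real \<Rightarrow> real" where
  "gsol_slope d x = (- x / sqrt (1 - x\<^sup>2)) * exp (- x / (2 * d)) * vsol d x
     + sqrt (1 - x\<^sup>2) * (- exp (- x / (2 * d)) / (2 * d)) * vsol d x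
     + sqrt (1 - x\<^sup>2) * exp (- x / (2 * d)) * ((vright d x / (1 - x) - vleft d x / (1 + x)) / 2)"

definition flux_factor :: "real \<Rightarrow> real \<Rightarrow> real" where
  "flux_factor d x = vright d x - vleft d x - (1 - x\<^sup>2) * (vleft d x + vright d x) / (2 * d)"

definition flux_factor_slope :: "real \<Rightarrow> real \<Rightarrow> real" where
  "flux_factor_slope d x = - 2 * source d (vsol d) x + vright d x / (1 - x) + vleft d x / (1 + x)
     - ((1 - x) * vright d x - (1 + x) * vleft d x) / (2 * d)"

definition flux_formula :: "real \<Rightarrow> real \<Rightarrow> real" where
  "flux_formula d x = halfexp d x * sqrt (1 - x\<^sup>2) * flux_factor d x / 2"

definition flux_slope :: "real \<Rightarrow> real \<Rightarrow> real" where
  "flux_slope d x = ((halfexp d x * sqrt (1 - x\<^sup>2) / (2 * d) - halfexp d x * x / sqrt (1 - x\<^sup>2))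
       * flux_factor d x + halfexp d x * sqrt (1 - x\<^sup>2) * flux_factor_slope d x) / 2"

lemma halfexp_square: "halfexp d x * halfexp d x = exp (x / d)"
  by (simp add: halfexp_def exp_add[symmetric])

lemma halfexp_inverse: "exp (- x / (2 * d)) = 1 / halfexp d x"
  by (simp add: halfexp_def exp_minus field_simps)

lemma vsol_halves: "d \<ge> 2 \<Longrightarrow> x \<in> {-1..1} \<Longrightarrow> vsol d x = (vleft d x + vright d x) / 2"
  using vsol_eq_green by (simp add: green_def vleft_def vright_def)

lemma vleft_deriv:
  "x \<in> {-1<..<1} \<Longrightarrow> (vleft d has_real_derivative source d (vsol d) x - vleft d x / (1 + x)) (at x)"
  unfolding vleft_def by (rule left_avg_deriv[OF source_vsol_continuous])

lemma vright_deriv: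
  "x \<in> {-1<..<1} \<Longrightarrow> (vright d has_real_derivative - source d (vsol d) x + vright d x / (1 - x)) (at x)"
  unfolding vright_def by (rule right_avg_deriv[OF source_vsol_continuous])

lemma vsol_deriv:
  assumes d: "d \<ge> 2" and x: "x \<in> {-1<..<1}"
  shows "(vsol d has_real_derivative (vright d x / (1 - x) - vleft d x / (1 + x)) / 2) (at x)"
proof -
  have "((\<lambda>y. (vleft d y + vright d y) / 2) has_real_derivative
      ((source d (vsol d) x - vleft d x / (1 + x)) + (- source d (vsol d) x + vright d x / (1 - x))) / 2) (at x)"
    by (intro DERIV_cdivide DERIV_add vleft_deriv vright_deriv x)
  then have "((\<lambda>y. (vleft d y + vright d y) / 2) has_real_derivative
      (vright d x / (1 - x) - vleft d x / (1 + x)) / 2) (at x)"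
    by (simp add: algebra_simps)
  then show ?thesis
    by (rule has_field_derivative_transform_within_open[of _ _ _ "{-1<..<1}"])
      (use x vsol_halves[OF d] in auto)
qed

lemma gsol_deriv:
  assumes d: "d \<ge> 2" and x: "x \<in> {-1<..<1}"
  shows "(gsol d has_real_derivative gsol_slope d x) (at x)"
proof -
  have pos: "0 < 1 - x\<^sup>2" using one_minus_square_pos[OF x] .
  have "((\<lambda>y. sqrt (1 - y\<^sup>2) * exp (- y / (2 * d)) * vsol d y) has_real_derivative
      (sqrt (1 - x\<^sup>2) * exp (- x / (2 * d))) * ((vright d x / (1 - x) - vleft d x / (1 + x)) / 2)
      + (sqrt (1 - x\<^sup>2) * (- exp (- x / (2 * d)) / (2 * d))
         + (- x / sqrt (1 - x\<^sup>2)) * exp (- x / (2 * d))) * vsol d x) (at x)"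
    using pos d by (intro DERIV_mult' vsol_deriv[OF d x])
      (auto intro!: derivative_eq_intros simp: field_simps)
  then have "((\<lambda>y. sqrt (1 - y\<^sup>2) * exp (- y / (2 * d)) * vsol d y) has_real_derivative
      gsol_slope d x) (at x)"
    by (simp add: gsol_slope_def algebra_simps)
  then show ?thesis
    by (rule has_field_derivative_transform_within_open[of _ _ _ "{-1<..<1}"])
      (use x in \<open>auto simp: gsol_def\<close>)
qed

lemma times_divide_square_root:
  fixes s a c :: real
  assumes "s > 0" and "s\<^sup>2 = a"
  shows "a * (c / s) = c * s"
  using assms by (auto simp: power2_eq_square field_simps)

lemma flux_identity:
  fixes y d r P Q s :: real
  assumes y: "-1 < y" "y < 1" and d: "d > 0" and s: "s > 0" "s\<^sup>2 = 1 - y\<^sup>2" and r: "r > 0"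
  shows "(r * r) * (1 - y\<^sup>2) * ((- y / s) * (1 / r) * ((P + Q) / 2)
      + s * (- (1 / r) / (2 * d)) * ((P + Q) / 2) + s * (1 / r) * ((Q / (1 - y) - P / (1 + y)) / 2))
    = r * s * (Q - P - (1 - y\<^sup>2) * (P + Q) / (2 * d)) / 2"
proof -
  have ys: "(1 - y\<^sup>2) * (y / s) = y * s" using times_divide_square_root[OF s] .
  have fy: "1 - y\<^sup>2 = (1 - y) * (1 + y)" by (simp add: power2_eq_square algebra_simps)
  have n: "1 - y \<noteq> 0" "1 + y \<noteq> 0" "1 - y * y \<noteq> 0"
    using y abs_square_less_1[of y] by (auto simp: power2_eq_square)
  have "(r * r) * (1 - y\<^sup>2) * ((- y / s) * (1 / r) * ((P + Q) / 2)
      + s * (- (1 / r) / (2 * d)) * ((P + Q) / 2) + s * (1 / r) * ((Q / (1 - y) - P / (1 + y)) / 2))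
    = r * (- ((1 - y\<^sup>2) * (y / s)) * ((P + Q) / 2) + (1 - y\<^sup>2) * s * (- 1 / (2 * d)) * ((P + Q) / 2)
      + (1 - y\<^sup>2) * s * ((Q / (1 - y) - P / (1 + y)) / 2))"
    using r s(1) d by (simp add: field_simps)
  also have "\<dots> = r * s * (Q - P - (1 - y\<^sup>2) * (P + Q) / (2 * d)) / 2"
    unfolding ys unfolding fy using n d by (simp add: field_simps)
  finally show ?thesis .
qed

lemma gsol_flux:
  assumes d: "d \<ge> 2" and y: "y \<in> {-1<..<1}"
  shows "gd_flux d (gsol d) y = flux_formula d y"
proof -
  have s: "sqrt (1 - y\<^sup>2) > 0" "(sqrt (1 - y\<^sup>2))\<^sup>2 = 1 - y\<^sup>2"
    using one_minus_square_pos[OF y] by auto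
  have yi: "y \<in> {-1..1}" using y by auto
  have "gd_flux d (gsol d) y = exp (y / d) * (1 - y\<^sup>2) * gsol_slope d y"
    unfolding gd_flux_def using DERIV_imp_deriv[OF gsol_deriv[OF d y]] by simp
  also have "\<dots> = flux_formula d y"
    unfolding gsol_slope_def flux_formula_def flux_factor_def halfexp_inverse[of y d]
      halfexp_square[of d y, symmetric] vsol_halves[OF d yi] using y d s
    by (intro flux_identity) (auto simp: halfexp_def)
  finally show ?thesis .
qed

lemma flux_factor_deriv:
  assumes x: "x \<in> {-1<..<1}"
  shows "(flux_factor d has_real_derivative flux_factor_slope d x) (at x)"
proof -
  let ?F = "source d (vsol d) x"
  have n: "1 - x \<noteq> 0" "1 + x \<noteq> 0" "1 - x * x \<noteq> 0"
    using x abs_square_less_1[of x] by (auto simp: power2_eq_square)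
  have sum: "((\<lambda>y. vleft d y + vright d y) has_real_derivative
      (?F - vleft d x / (1 + x)) + (- ?F + vright d x / (1 - x))) (at x)"
    by (intro DERIV_add vleft_deriv vright_deriv x)
  have "(flux_factor d has_real_derivative
      ((- ?F + vright d x / (1 - x)) - (?F - vleft d x / (1 + x)))
      - ((1 - x\<^sup>2) * ((?F - vleft d x / (1 + x)) + (- ?F + vright d x / (1 - x)))
         + (- (2 * x)) * (vleft d x + vright d x)) / (2 * d)) (at x)"
    unfolding flux_factor_def[abs_def]
    by (intro DERIV_diff DERIV_cdivide DERIV_mult'[OF _ sum] vleft_deriv vright_deriv x)
      (auto intro!: derivative_eq_intros)
  moreover have "((- ?F + vright d x / (1 - x)) - (?F - vleft d x / (1 + x)))
      - ((1 - x\<^sup>2) * ((?F - vleft d x / (1 + x)) + (- ?F + vright d x / (1 - x)))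
         + (- (2 * x)) * (vleft d x + vright d x)) / (2 * d) = flux_factor_slope d x"
  proof -
    have e: "(1 - x\<^sup>2) * ((?F - vleft d x / (1 + x)) + (- ?F + vright d x / (1 - x)))
        = (1 + x) * vright d x - (1 - x) * vleft d x"
      using n by (simp add: power2_eq_square field_simps)
    show ?thesis unfolding e
      by (simp add: flux_factor_slope_def algebra_simps diff_divide_distrib add_divide_distrib)
  qed
  ultimately show ?thesis by simp
qed

lemma gsol_flux_deriv:
  assumes d: "d \<ge> 2" and x: "x \<in> {-1<..<1}"
  shows "(gd_flux d (gsol d) has_real_derivative flux_slope d x) (at x)"
proof -
  have pos: "0 < 1 - x\<^sup>2" using one_minus_square_pos[OF x] .
  have "(flux_formula d has_real_derivative
      ((halfexp d x * sqrt (1 - x\<^sup>2)) * flux_factor_slope d x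
       + (halfexp d x * (- x / sqrt (1 - x\<^sup>2)) + halfexp d x / (2 * d) * sqrt (1 - x\<^sup>2))
         * flux_factor d x) / 2) (at x)"
    unfolding flux_formula_def[abs_def] halfexp_def using pos d
    by (intro DERIV_cdivide DERIV_mult' flux_factor_deriv[OF x, unfolded halfexp_def])
      (auto intro!: derivative_eq_intros simp: field_simps)
  then have "(flux_formula d has_real_derivative flux_slope d x) (at x)"
    by (simp add: flux_slope_def algebra_simps)
  then show ?thesis
    by (rule has_field_derivative_transform_within_open[of _ _ _ "{-1<..<1}"])
      (use x gsol_flux[OF d] in auto)
qed

(* The rational identity behind the differential equation, with the averages as
   indeterminates p and q. *)
lemma ode_rational_identity:
  fixes x d r p q :: real
  assumes x: "-1 < x" "x < 1" and d: "d > 0"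
  defines "Z \<equiv> q - p - (1 - x\<^sup>2) * (p + q) / (2 * d)"
    and "Z' \<equiv> - 2 * (- r + (x / d - (1 - x\<^sup>2) / (4 * d\<^sup>2)) * ((p + q) / 2))
       + q / (1 - x) + p / (1 + x) - ((1 - x) * q - (1 + x) * p) / (2 * d)"
  shows "- ((1 - x\<^sup>2) / (4 * d)) * Z + (x / 2) * Z - ((1 - x\<^sup>2) / 2) * Z' + (p + q) / 2
    = - (1 - x\<^sup>2) * r"
proof -
  have "x * x < 1" using x abs_square_less_1[of x] by (simp add: power2_eq_square)
  then have "1 - x \<noteq> 0" "1 + x \<noteq> 0" "d * d * 8 - d * (d * (x * (x * 8))) \<noteq> 0"
    using x d by auto
  then show ?thesis unfolding Z_def Z'_def using d by (simp add: field_simps power2_eq_square)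
qed

(* The same identity with the square root s of 1 - x^2 and the weight r = halfexp. *)
lemma ode_identity:
  fixes x d r p q s :: real
  assumes x: "-1 < x" "x < 1" and d: "d > 0" and s: "s > 0" "s\<^sup>2 = 1 - x\<^sup>2" and r: "r > 0"
  defines "Z \<equiv> q - p - (1 - x\<^sup>2) * (p + q) / (2 * d)"
    and "Z' \<equiv> - 2 * (- r + (x / d - (1 - x\<^sup>2) / (4 * d\<^sup>2)) * ((p + q) / 2))
       + q / (1 - x) + p / (1 + x) - ((1 - x) * q - (1 + x) * p) / (2 * d)"
  shows "- (1 - x\<^sup>2) * (((r * s / (2 * d) - r * x / s) * Z + r * s * Z') / 2)
      + (r * r) * (s * (1 / r) * ((p + q) / 2)) = - (s * (1 - x\<^sup>2)) * (r * r)"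
proof -
  define k where "k = r * x / s"
  have xs: "(1 - x\<^sup>2) * k = r * x * s"
    unfolding k_def using times_divide_square_root[OF s] .
  have "- (1 - x\<^sup>2) * (((r * s / (2 * d) - k) * Z + r * s * Z') / 2)
      + (r * r) * (s * (1 / r) * ((p + q) / 2))
    = - (1 - x\<^sup>2) * ((r * s / (2 * d)) * Z + r * s * Z') / 2
      + ((1 - x\<^sup>2) * k) * Z / 2 + (r * r) * (s * (1 / r) * ((p + q) / 2))"
    by (simp add: field_simps)
  also have "\<dots> = r * s * (- ((1 - x\<^sup>2) / (4 * d)) * Z + (x / 2) * Z - ((1 - x\<^sup>2) / 2) * Z'
      + (p + q) / 2)"
    unfolding xs using r d by (simp add: field_simps)
  also have "\<dots> = - (s * (1 - x\<^sup>2)) * (r * r)"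
    unfolding Z_def Z'_def ode_rational_identity[OF x d] by (simp add: algebra_simps)
  finally show ?thesis unfolding k_def .
qed

lemma powr_three_halves:
  fixes a :: real
  assumes "0 < a"
  shows "a powr (3 / 2) = sqrt a * a"
proof -
  have "a powr (3 / 2) = a powr (1 / 2 + 1)" by simp
  also have "\<dots> = a powr (1 / 2) * a" using assms by (subst powr_add) auto
  finally show ?thesis using assms by (simp add: powr_half_sqrt)
qed

lemma gsol_ode:
  assumes d: "d \<ge> 2" and x: "x \<in> {-1<..<1}"
  shows "- (1 - x\<^sup>2) * flux_slope d x + exp (x / d) * gsol d x
    = - ((1 - x\<^sup>2) powr (3 / 2)) * exp (x / d)"
proof -
  have pos: "0 < 1 - x\<^sup>2" using one_minus_square_pos[OF x] .
  have s: "sqrt (1 - x\<^sup>2) > 0" "(sqrt (1 - x\<^sup>2))\<^sup>2 = 1 - x\<^sup>2" using pos by auto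
  have xi: "x \<in> {-1..1}" using x by auto
  have g: "gsol d x = sqrt (1 - x\<^sup>2) * (1 / halfexp d x) * vsol d x"
    using x halfexp_inverse[of x d] by (simp add: gsol_def)
  show ?thesis
    unfolding flux_slope_def flux_factor_def flux_factor_slope_def g halfexp_square[symmetric]
      powr_three_halves[OF pos] source_def potential_def vsol_halves[OF d xi]
    using d x s by (intro ode_identity) (auto simp: halfexp_def)
qed

(* Integrability of the energy of gsol follows from continuity on [-1,1] of the
   bounded expressions below. *)
lemma flux_factor_continuous: "continuous_on {-1..1} (flux_factor d)"
  unfolding flux_factor_def[abs_def] vleft_def vright_def divide_inverse
  by (intro continuous_intros left_avg_continuous right_avg_continuous source_vsol_continuous)

lemma gsol_slope_square:
  assumes d: "d \<ge> 2" and x: "x \<in> {-1<..<1}"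
  shows "(1 - x\<^sup>2) * (gsol_slope d x)\<^sup>2 = (flux_factor d x / (2 * halfexp d x))\<^sup>2"
proof -
  have pos: "0 < 1 - x\<^sup>2" using one_minus_square_pos[OF x] .
  have r: "halfexp d x > 0" by (simp add: halfexp_def)
  have nz: "halfexp d x * halfexp d x * (1 - x\<^sup>2) \<noteq> 0" using r pos by simp
  have "halfexp d x * halfexp d x * (1 - x\<^sup>2) * gsol_slope d x = flux_formula d x"
    using gsol_flux[OF d x] DERIV_imp_deriv[OF gsol_deriv[OF d x]]
    by (simp add: gd_flux_def halfexp_square)
  then have G: "gsol_slope d x = flux_formula d x / (halfexp d x * halfexp d x * (1 - x\<^sup>2))"
    by (subst nonzero_eq_divide_eq[OF nz]) (simp add: mult.commute)
  define a where "a = 1 - x\<^sup>2"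
  have a: "a > 0" "(sqrt a)\<^sup>2 = a" using pos by (auto simp: a_def)
  have "(halfexp d x * sqrt a * flux_factor d x / 2) / (halfexp d x * halfexp d x * a)
      = sqrt a * flux_factor d x / (2 * halfexp d x * a)"
    using r a by (simp add: field_simps)
  then have "a * (gsol_slope d x)\<^sup>2 = a * (sqrt a)\<^sup>2 * (flux_factor d x)\<^sup>2 / (2 * halfexp d x * a)\<^sup>2"
    unfolding G flux_formula_def a_def[symmetric] by (simp add: power_divide power_mult_distrib)
  also have "\<dots> = (flux_factor d x / (2 * halfexp d x))\<^sup>2"
    unfolding a(2) using r a by (simp add: power_divide power_mult_distrib power2_eq_square)
  finally show ?thesis unfolding a_def .
qed

lemma gsol_is_gd:
  assumes d: "d \<ge> 2"
  shows "is_gd d (gsol d)"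
  unfolding is_gd_def
proof (intro conjI ballI allI impI)
  show "gsol d x = 0" if "x \<notin> {-1<..<1}" for x
    by (subst gsol_def) (simp only: that if_False)
  have "continuous_on {-1..1} (\<lambda>x. (exp (- x / (2 * d)) * vsol d x)\<^sup>2)"
    unfolding divide_inverse by (intro continuous_intros vsol_continuous)
  then have "(\<lambda>x. (exp (- x / (2 * d)) * vsol d x)\<^sup>2) integrable_on {-1<..<1}"
    using integrable_continuous_interval integrable_on_open_interval_real by blast
  then show "(\<lambda>x. (gsol d x)\<^sup>2 / (1 - x\<^sup>2)) integrable_on {-1<..<1}"
  proof (rule integrable_eq)
    fix x :: real assume "x \<in> {-1<..<1}"
    with one_minus_square_pos[OF this]
    show "(exp (- x / (2 * d)) * vsol d x)\<^sup>2 = (gsol d x)\<^sup>2 / (1 - x\<^sup>2)"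
      by (simp add: gsol_def power_mult_distrib)
  qed
  have "continuous_on {-1..1} (\<lambda>x. (flux_factor d x / (2 * halfexp d x))\<^sup>2)"
    unfolding halfexp_def using d by (intro continuous_intros flux_factor_continuous) auto
  then have "(\<lambda>x. (flux_factor d x / (2 * halfexp d x))\<^sup>2) integrable_on {-1<..<1}"
    using integrable_continuous_interval integrable_on_open_interval_real by blast
  then show "(\<lambda>x. (1 - x\<^sup>2) * (deriv (gsol d) x)\<^sup>2) integrable_on {-1<..<1}"
    by (rule integrable_eq)
      (use gsol_slope_square[OF d] DERIV_imp_deriv[OF gsol_deriv[OF d]] in auto)
  fix x :: real assume x: "x \<in> {-1<..<1}"
  show "gsol d differentiable at x"
    using gsol_deriv[OF d x] real_differentiable_def by blast
  show "gd_flux d (gsol d) differentiable at x"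
    using gsol_flux_deriv[OF d x] real_differentiable_def by blast
  show "- (1 - x\<^sup>2) * deriv (gd_flux d (gsol d)) x + exp (x / d) * gsol d x
      = - ((1 - x\<^sup>2) powr (3 / 2)) * exp (x / d)"
    using gsol_ode[OF d x] DERIV_imp_deriv[OF gsol_flux_deriv[OF d x]] by simp
qed

(* 1/(1-x) is not integrable near 1, so it cannot be dominated by an integrable
   function; the left version follows by reflection. *)
lemma inverse_distance_not_dominated_right:
  fixes m :: "real \<Rightarrow> real"
  assumes m: "m integrable_on {-1..1}" and m0: "\<And>x. x \<in> {-1..1} \<Longrightarrow> 0 \<le> m x"
    and b: "-1 \<le> b" "b < 1" and K: "K \<ge> 0"
    and le: "\<And>x. b \<le> x \<Longrightarrow> x < 1 \<Longrightarrow> 1 / (1 - x) \<le> K * m x"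
  shows False
proof -
  define C where "C = K * integral {-1..1} m"
  have C0: "C \<ge> 0" unfolding C_def using K integral_nonneg[OF m m0] by simp
  (* \<eta> is chosen so that the integral of 1/(1-x) over [b, 1-\<eta>] equals C + 1 > C. *)
  define \<eta> where "\<eta> = (1 - b) * exp (- (C + 1))"
  have \<eta>0: "\<eta> > 0" using b by (simp add: \<eta>_def)
  have "exp (- (C + 1)) < 1" using C0 by simp
  then have \<eta>1: "\<eta> < 1 - b" using b unfolding \<eta>_def by (simp add: mult_less_cancel_left1)
  have sub: "{b..1 - \<eta>} \<subseteq> {-1..1}" using b \<eta>0 by auto
  have "((\<lambda>x. 1 / (1 - x)) has_integral (- ln (1 - (1 - \<eta>)) - (- ln (1 - b)))) {b..1 - \<eta>}"
    by (rule fundamental_theorem_real) (use \<eta>0 \<eta>1 in \<open>auto intro!: derivative_eq_intros simp: field_simps\<close>)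
  then have log: "((\<lambda>x. 1 / (1 - x)) has_integral (ln (1 - b) - ln \<eta>)) {b..1 - \<eta>}" by simp
  have "ln (1 - b) - ln \<eta> \<le> integral {b..1 - \<eta>} (\<lambda>x. K * m x)"
    using log by (rule has_integral_le[OF _ integrable_integral])
      (use le \<eta>0 integrable_on_mult_right[OF integrable_on_subinterval[OF m sub]] in auto)
  also have "\<dots> = K * integral {b..1 - \<eta>} m" by simp
  also have "\<dots> \<le> C"
    unfolding C_def using m0 sub
    by (intro mult_left_mono integral_subset_le integrable_on_subinterval[OF m sub] m K) auto
  finally show False using b by (simp add: \<eta>_def ln_mult)
qed

lemma inverse_distance_not_dominated_left:
  fixes m :: "real \<Rightarrow> real"
  assumes m: "m integrable_on {-1..1}" and m0: "\<And>x. x \<in> {-1..1} \<Longrightarrow> 0 \<le> m x"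
    and a: "-1 < a" "a \<le> 1" and K: "K \<ge> 0"
    and le: "\<And>x. -1 < x \<Longrightarrow> x \<le> a \<Longrightarrow> 1 / (1 + x) \<le> K * m x"
  shows False
proof (rule inverse_distance_not_dominated_right[of "\<lambda>x. m (- x)" "- a" K])
  show "(\<lambda>x. m (- x)) integrable_on {-1..1}"
    using m Henstock_Kurzweil_Integration.integrable_reflect_real[of m 1 "-1"] by simp
  show "1 / (1 - x) \<le> K * m (- x)" if "- a \<le> x" "x < 1" for x
    using le[of "- x"] that by simp
qed (use m0 a K in auto)

lemma one_minus_square_le:
  fixes y :: real
  shows "1 - y\<^sup>2 \<le> 2 * (1 - y)" and "1 - y\<^sup>2 \<le> 2 * (1 + y)"
proof -
  have "0 \<le> (1 - y)\<^sup>2" "0 \<le> (1 + y)\<^sup>2" by simp_all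
  then show "1 - y\<^sup>2 \<le> 2 * (1 - y)" "1 - y\<^sup>2 \<le> 2 * (1 + y)"
    by (simp_all add: power2_eq_square algebra_simps)
qed

(* A nondecreasing function on (-1,1) which is dominated by (1 - x^2) times an
   integrable function vanishes identically: a nonzero value would persist towards one
   endpoint and force 1/(1-x) or 1/(1+x) to be integrable there. *)
lemma monotone_dominated_vanishes:
  fixes \<phi> m :: "real \<Rightarrow> real"
  assumes mono: "\<And>a b. a \<in> {-1<..<1} \<Longrightarrow> b \<in> {-1<..<1} \<Longrightarrow> a \<le> b \<Longrightarrow> \<phi> a \<le> \<phi> b"
    and dom: "\<And>x. x \<in> {-1<..<1} \<Longrightarrow> \<bar>\<phi> x\<bar> \<le> C * (1 - x\<^sup>2) * m x"
    and m: "m integrable_on {-1..1}" and m0: "\<And>x. x \<in> {-1..1} \<Longrightarrow> 0 \<le> m x"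
    and C: "C \<ge> 0" and x: "x \<in> {-1<..<1}"
  shows "\<phi> x = 0"
proof -
  have dom2: "\<bar>\<phi> y\<bar> \<le> C * (2 * (1 - y)) * m y" "\<bar>\<phi> y\<bar> \<le> C * (2 * (1 + y)) * m y"
    if y: "y \<in> {-1<..<1}" for y
  proof -
    have "0 \<le> C * m y" using C m0[of y] y by simp
    then have "C * m y * (1 - y\<^sup>2) \<le> C * m y * (2 * (1 - y))"
      "C * m y * (1 - y\<^sup>2) \<le> C * m y * (2 * (1 + y))"
      using one_minus_square_le by (blast intro: mult_left_mono)+
    then show "\<bar>\<phi> y\<bar> \<le> C * (2 * (1 - y)) * m y" "\<bar>\<phi> y\<bar> \<le> C * (2 * (1 + y)) * m y"
      using dom[OF y] by (simp_all add: mult_ac)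
  qed
  show ?thesis
  proof (rule ccontr)
    assume "\<phi> x \<noteq> 0"
    then consider "\<phi> x > 0" | "\<phi> x < 0" by linarith
    then show False
    proof cases
      case 1
      show False
      proof (rule inverse_distance_not_dominated_right[OF m m0, of x "2 * C / \<phi> x"])
        fix y assume y: "x \<le> y" "y < 1"
        with x have "\<phi> x \<le> C * (2 * (1 - y)) * m y"
          using mono[of x y] dom2(1)[of y] by auto
        then show "1 / (1 - y) \<le> 2 * C / \<phi> x * m y"
          using 1 y by (simp add: field_simps)
      qed (use x C 1 in auto)
    next
      case 2
      show False
      proof (rule inverse_distance_not_dominated_left[OF m m0, of x "- 2 * C / \<phi> x"])
        fix y assume y: "-1 < y" "y \<le> x"
        with x have "- \<phi> x \<le> C * (2 * (1 + y)) * m y"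
          using mono[of y x] dom2(2)[of y] by auto
        then show "1 / (1 + y) \<le> - 2 * C / \<phi> x * m y"
          using 2 y by (simp add: field_simps)
      qed (use x C 2 in \<open>auto simp: divide_nonneg_neg\<close>)
    qed
  qed
qed

(* Regularity of solutions of is_gd in the interior: g and g' = flux / (exp(x/d) (1 - x^2))
   are continuous. *)
lemma is_gd_continuous:
  assumes "is_gd d g"
  shows "continuous_on {-1<..<1} g"
  using assms unfolding is_gd_def
  by (intro continuous_at_imp_continuous_on) (auto intro: differentiable_imp_continuous_within)

lemma is_gd_deriv_continuous:
  assumes g: "is_gd d g"
  shows "continuous_on {-1<..<1} (deriv g)"
proof -
  have "continuous_on {-1<..<1} (gd_flux d g)"
    using g unfolding is_gd_def
    by (intro continuous_at_imp_continuous_on) (auto intro: differentiable_imp_continuous_within)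
  then have "continuous_on {-1<..<1} (\<lambda>x. gd_flux d g x / (exp (x / d) * (1 - x\<^sup>2)))"
    unfolding divide_inverse[of "x::real" d for x]
    by (intro continuous_intros) (auto dest: one_minus_square_pos[THEN less_imp_neq])
  then show ?thesis
  proof (rule continuous_on_eq)
    fix x :: real assume "x \<in> {-1<..<1}"
    with one_minus_square_pos[OF this]
    show "gd_flux d g x / (exp (x / d) * (1 - x\<^sup>2)) = deriv g x" by (simp add: gd_flux_def)
  qed
qed

(* Weighted L^2 integrability is preserved by differences (pointwise (u-v)^2 \<le> 2u^2 + 2v^2). *)
lemma integrable_weighted_square_difference:
  fixes w u v :: "real \<Rightarrow> real"
  assumes cont: "continuous_on {-1<..<1} (\<lambda>x. w x * (u x - v x)\<^sup>2)"
    and w: "\<And>x. x \<in> {-1<..<1} \<Longrightarrow> 0 \<le> w x"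
    and u: "(\<lambda>x. w x * (u x)\<^sup>2) integrable_on {-1<..<1}"
    and v: "(\<lambda>x. w x * (v x)\<^sup>2) integrable_on {-1<..<1}"
  shows "(\<lambda>x. w x * (u x - v x)\<^sup>2) integrable_on {-1<..<1}"
proof (rule measurable_bounded_by_integrable_imp_integrable_real)
  show "(\<lambda>x. w x * (u x - v x)\<^sup>2) \<in> borel_measurable (lebesgue_on {-1<..<1})"
    by (rule continuous_imp_measurable_on_sets_lebesgue[OF cont]) simp
  show "(\<lambda>x. 2 * (w x * (u x)\<^sup>2) + 2 * (w x * (v x)\<^sup>2)) integrable_on {-1<..<1}"
    using u v by (intro integrable_add integrable_on_mult_right)
  show "\<bar>w x * (u x - v x)\<^sup>2\<bar> \<le> 2 * (w x * (u x)\<^sup>2) + 2 * (w x * (v x)\<^sup>2)"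
    if x: "x \<in> {-1<..<1}" for x
  proof -
    have "(u x - v x)\<^sup>2 \<le> 2 * (u x)\<^sup>2 + 2 * (v x)\<^sup>2"
      using zero_le_power2[of "u x + v x"] unfolding power2_diff power2_sum by linarith
    then have "w x * (u x - v x)\<^sup>2 \<le> w x * (2 * (u x)\<^sup>2 + 2 * (v x)\<^sup>2)"
      by (rule mult_left_mono) (rule w[OF x])
    then show ?thesis using w[OF x] by (simp add: algebra_simps)
  qed
qed simp

lemma abs_mult_le_weighted_squares:
  fixes a c t :: real
  assumes "t > 0"
  shows "\<bar>a * c\<bar> \<le> (a\<^sup>2 / t + t * c\<^sup>2) / 2"
proof -
  have "0 \<le> (\<bar>a\<bar> - t * \<bar>c\<bar>)\<^sup>2 / t" using assms by simp
  also have "\<dots> = a\<^sup>2 / t + t * c\<^sup>2 - 2 * \<bar>a * c\<bar>"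
    using assms by (simp add: power2_eq_square field_simps abs_mult)
  finally show ?thesis by simp
qed

lemma nonneg_deriv_imp_mono_open_interval:
  fixes \<phi> e :: "real \<Rightarrow> real"
  assumes deriv: "\<And>x. x \<in> {-1<..<1} \<Longrightarrow> (\<phi> has_real_derivative e x) (at x)"
    and e0: "\<And>x. x \<in> {-1<..<1} \<Longrightarrow> 0 \<le> e x"
    and ab: "a \<in> {-1<..<1}" "b \<in> {-1<..<1}" "a \<le> b"
  shows "\<phi> a \<le> \<phi> b"
proof (rule DERIV_nonneg_imp_increasing_open[OF ab(3)])
  show "\<exists>y. (\<phi> has_real_derivative y) (at x) \<and> 0 \<le> y" if "a < x" "x < b" for x
    using deriv e0 that ab by (metis greaterThanLessThan_iff order.strict_trans)
  have "\<forall>x\<in>{a..b}. isCont \<phi> x"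
    using deriv ab
    by (metis DERIV_isCont atLeastAtMost_iff greaterThanLessThan_iff order.strict_trans1
        order.strict_trans2)
  then show "continuous_on {a..b} \<phi>" by (rule continuous_at_imp_continuous_on)
qed

lemma difference_flux_product_deriv:
  assumes g1: "is_gd d g1" and g2: "is_gd d g2" and x: "x \<in> {-1<..<1}"
  shows "((\<lambda>x. (g1 x - g2 x) * (gd_flux d g1 x - gd_flux d g2 x)) has_real_derivative
      exp (x / d) * (1 - x\<^sup>2) * (deriv g1 x - deriv g2 x)\<^sup>2
      + exp (x / d) * (g1 x - g2 x)\<^sup>2 / (1 - x\<^sup>2)) (at x)"
proof -
  note G1 = g1[unfolded is_gd_def] and G2 = g2[unfolded is_gd_def]
  have h: "((\<lambda>x. g1 x - g2 x) has_real_derivative deriv g1 x - deriv g2 x) (at x)"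
    using G1 G2 x by (intro DERIV_diff) (auto simp: DERIV_deriv_iff_real_differentiable)
  have F: "((\<lambda>x. gd_flux d g1 x - gd_flux d g2 x) has_real_derivative
      deriv (gd_flux d g1) x - deriv (gd_flux d g2) x) (at x)"
    using G1 G2 x by (intro DERIV_diff) (auto simp: DERIV_deriv_iff_real_differentiable)
  have "- (1 - x\<^sup>2) * deriv (gd_flux d g1) x + exp (x / d) * g1 x
      = - (1 - x\<^sup>2) * deriv (gd_flux d g2) x + exp (x / d) * g2 x"
    using G1 G2 x by auto
  then have "(1 - x\<^sup>2) * (deriv (gd_flux d g1) x - deriv (gd_flux d g2) x)
      = exp (x / d) * (g1 x - g2 x)"
    by (simp add: algebra_simps)
  then have F': "deriv (gd_flux d g1) x - deriv (gd_flux d g2) x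
      = exp (x / d) * (g1 x - g2 x) / (1 - x\<^sup>2)"
    using one_minus_square_pos[OF x] by (simp add: field_simps)
  from DERIV_mult'[OF h F] show ?thesis
    unfolding F' by (simp add: gd_flux_def power2_eq_square algebra_simps)
qed

lemma difference_flux_product_bound:
  assumes x: "x \<in> {-1<..<1}"
  shows "\<bar>(g1 x - g2 x) * (gd_flux d g1 x - gd_flux d g2 x)\<bar>
    \<le> exp (1 / \<bar>d\<bar>) * (1 - x\<^sup>2)
      * (((g1 x - g2 x)\<^sup>2 / (1 - x\<^sup>2) + (1 - x\<^sup>2) * (deriv g1 x - deriv g2 x)\<^sup>2) / 2)"
    (is "_ \<le> _ * _ * ?m")
proof -
  have pos: "0 < 1 - x\<^sup>2" using one_minus_square_pos[OF x] .
  have "x / d \<le> \<bar>x\<bar> / \<bar>d\<bar>" by (metis abs_divide abs_ge_self)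
  also have "\<dots> \<le> 1 / \<bar>d\<bar>" using x by (intro divide_right_mono) auto
  finally have "exp (x / d) \<le> exp (1 / \<bar>d\<bar>)" by simp
  moreover have "\<bar>(g1 x - g2 x) * (deriv g1 x - deriv g2 x)\<bar> \<le> ?m"
    by (rule abs_mult_le_weighted_squares[OF pos])
  moreover have "gd_flux d g1 x - gd_flux d g2 x
      = exp (x / d) * (1 - x\<^sup>2) * (deriv g1 x - deriv g2 x)"
    by (simp add: gd_flux_def algebra_simps)
  then have "\<bar>(g1 x - g2 x) * (gd_flux d g1 x - gd_flux d g2 x)\<bar>
      = exp (x / d) * (1 - x\<^sup>2) * \<bar>(g1 x - g2 x) * (deriv g1 x - deriv g2 x)\<bar>"
    using pos by (simp add: abs_mult)
  ultimately show ?thesis using pos by (auto intro!: mult_mono)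
qed

lemma difference_energy_integrable:
  assumes g1: "is_gd d g1" and g2: "is_gd d g2"
  shows "(\<lambda>x. ((g1 x - g2 x)\<^sup>2 / (1 - x\<^sup>2) + (1 - x\<^sup>2) * (deriv g1 x - deriv g2 x)\<^sup>2) / 2)
    integrable_on {-1..1}"
proof -
  let ?I = "{-1<..<1::real}"
  note pos = one_minus_square_pos
  have weighted: "(\<lambda>x. inverse (1 - x\<^sup>2) * (g x)\<^sup>2) integrable_on ?I" if "is_gd d g" for g
  proof -
    have "(\<lambda>x. (g x)\<^sup>2 / (1 - x\<^sup>2)) integrable_on ?I" using that unfolding is_gd_def by blast
    then show ?thesis by (rule integrable_eq) (simp add: divide_inverse mult.commute)
  qed
  have i1: "(\<lambda>x. inverse (1 - x\<^sup>2) * (g1 x - g2 x)\<^sup>2) integrable_on ?I"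
  proof (rule integrable_weighted_square_difference[OF _ _ weighted[OF g1] weighted[OF g2]])
    have "1 - x\<^sup>2 \<noteq> 0" if "x \<in> ?I" for x using pos[OF that] by simp
    then show "continuous_on ?I (\<lambda>x. inverse (1 - x\<^sup>2) * (g1 x - g2 x)\<^sup>2)"
      by (intro continuous_intros is_gd_continuous[OF g1] is_gd_continuous[OF g2]) auto
  qed (use pos in \<open>simp add: less_imp_le\<close>)
  have i2: "(\<lambda>x. (1 - x\<^sup>2) * (deriv g1 x - deriv g2 x)\<^sup>2) integrable_on ?I"
  proof (rule integrable_weighted_square_difference)
    show "(\<lambda>x. (1 - x\<^sup>2) * (deriv g1 x)\<^sup>2) integrable_on ?I"
      "(\<lambda>x. (1 - x\<^sup>2) * (deriv g2 x)\<^sup>2) integrable_on ?I"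
      using g1 g2 unfolding is_gd_def by blast+
    show "continuous_on ?I (\<lambda>x. (1 - x\<^sup>2) * (deriv g1 x - deriv g2 x)\<^sup>2)"
      by (intro continuous_intros is_gd_deriv_continuous[OF g1] is_gd_deriv_continuous[OF g2])
  qed (use pos in \<open>simp add: less_imp_le\<close>)
  have "(\<lambda>x. (inverse (1 - x\<^sup>2) * (g1 x - g2 x)\<^sup>2
      + (1 - x\<^sup>2) * (deriv g1 x - deriv g2 x)\<^sup>2) * (1 / 2)) integrable_on ?I"
    by (rule integrable_on_mult_left[OF integrable_add[OF i1 i2]])
  then show ?thesis
    unfolding integrable_on_open_interval_real[symmetric]
    by (rule integrable_eq) (simp add: field_simps)
qed

(* Uniqueness of solutions of is_gd: phi = (g1 - g2) * (flux g1 - flux g2) is nondecreasing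
   and dominated by (1 - x^2) times the integrable energy m, hence phi = 0; then its
   derivative, the energy density, vanishes, which forces g1 = g2. *)
lemma is_gd_unique:
  assumes g1: "is_gd d g1" and g2: "is_gd d g2"
  shows "g1 = g2"
proof -
  let ?I = "{-1<..<1::real}"
  note pos = one_minus_square_pos
  define \<phi> where "\<phi> x = (g1 x - g2 x) * (gd_flux d g1 x - gd_flux d g2 x)" for x
  define e where "e x = exp (x / d) * (1 - x\<^sup>2) * (deriv g1 x - deriv g2 x)\<^sup>2
    + exp (x / d) * (g1 x - g2 x)\<^sup>2 / (1 - x\<^sup>2)" for x
  define m where "m x = ((g1 x - g2 x)\<^sup>2 / (1 - x\<^sup>2) + (1 - x\<^sup>2) * (deriv g1 x - deriv g2 x)\<^sup>2) / 2"
    for x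
  have \<phi>_deriv: "(\<phi> has_real_derivative e x) (at x)" if "x \<in> ?I" for x
    unfolding \<phi>_def[abs_def] e_def by (rule difference_flux_product_deriv[OF g1 g2 that])
  have e0: "0 \<le> e x" if "x \<in> ?I" for x
    unfolding e_def using pos[OF that] by (intro add_nonneg_nonneg) auto
  have m0: "0 \<le> m x" if "x \<in> {-1..1}" for x
    using that abs_square_le_1[of x] by (auto simp: m_def)
  have dom: "\<bar>\<phi> x\<bar> \<le> exp (1 / \<bar>d\<bar>) * (1 - x\<^sup>2) * m x" if "x \<in> ?I" for x
    unfolding \<phi>_def m_def by (rule difference_flux_product_bound[OF that])
  have \<phi>0: "\<phi> x = 0" if "x \<in> ?I" for x
  proof (rule monotone_dominated_vanishes[of \<phi> "exp (1 / \<bar>d\<bar>)" m x])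
    show "\<phi> a \<le> \<phi> b" if "a \<in> ?I" "b \<in> ?I" "a \<le> b" for a b
      by (rule nonneg_deriv_imp_mono_open_interval[OF \<phi>_deriv e0 that])
    show "m integrable_on {-1..1}"
      unfolding m_def[abs_def] by (rule difference_energy_integrable[OF g1 g2])
  qed (use dom m0 that in auto)
  have "g1 x = g2 x" if x: "x \<in> ?I" for x
  proof -
    have "(\<phi> has_real_derivative 0) (at x)"
      by (rule has_field_derivative_transform_within_open[of "\<lambda>_. 0" 0 x ?I])
        (use x \<phi>0 in auto)
    then have "e x = 0" using DERIV_unique[OF \<phi>_deriv[OF x]] by blast
    moreover have "0 \<le> exp (x / d) * (1 - x\<^sup>2) * (deriv g1 x - deriv g2 x)\<^sup>2"
      using pos[OF x] by simp
    ultimately have "exp (x / d) * (g1 x - g2 x)\<^sup>2 / (1 - x\<^sup>2) \<le> 0" unfolding e_def by linarith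
    then show ?thesis using pos[OF x] by (simp add: divide_le_0_iff mult_le_0_iff)
  qed
  then show ?thesis using g1 g2 unfolding is_gd_def by (intro ext) (metis)
qed

lemma exp_remainder_bound:
  fixes z :: real
  assumes "\<bar>z\<bar> \<le> 1 / 2"
  shows "\<bar>exp z - 1 - z\<bar> \<le> 2 * z\<^sup>2"
proof -
  have lower: "1 + z \<le> exp z" by simp
  have upper: "exp z \<le> 1 + z + 2 * z\<^sup>2"
  proof (cases "z \<ge> 0")
    case True
    then have "exp z \<le> 1 + z + z\<^sup>2" using exp_bound[of z] assms by auto
    then show ?thesis using zero_le_power2[of z] by linarith
  next
    case False
    then have pos: "0 < 1 - z" by simp
    have "exp z = 1 / exp (- z)" by (simp add: exp_minus field_simps)
    also have "\<dots> \<le> 1 / (1 - z)"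
      using exp_ge_add_one_self[of "- z"] pos by (intro divide_left_mono) auto
    also have "\<dots> \<le> 1 + z + 2 * z\<^sup>2"
    proof -
      have "(1 + z + 2 * z\<^sup>2) * (1 - z) = 1 + z\<^sup>2 * (1 - 2 * z)"
        by (simp add: power2_eq_square algebra_simps)
      moreover have "0 \<le> z\<^sup>2 * (1 - 2 * z)" using False by simp
      ultimately show ?thesis using pos by (simp add: divide_simps)
    qed
    finally show ?thesis .
  qed
  show ?thesis using lower upper zero_le_power2[of z] unfolding abs_le_iff by linarith
qed

lemma halfexp_expansion:
  assumes d: "d \<ge> 2" and y: "y \<in> {-1..1}"
  shows "\<bar>halfexp d y - 1 - y / (2 * d)\<bar> \<le> 1 / (2 * d\<^sup>2)"
proof -
  have z: "\<bar>y / (2 * d)\<bar> \<le> 1 / (2 * d)" using d y by (auto simp: abs_div divide_simps)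
  moreover have "1 / (2 * d) \<le> 1 / 2" using d by (simp add: divide_simps)
  ultimately have "\<bar>halfexp d y - 1 - y / (2 * d)\<bar> \<le> 2 * (y / (2 * d))\<^sup>2"
    unfolding halfexp_def by (intro exp_remainder_bound) linarith
  also have "\<dots> \<le> 2 * (1 / (2 * d))\<^sup>2"
  proof -
    have "\<bar>y / (2 * d)\<bar>\<^sup>2 \<le> (1 / (2 * d))\<^sup>2" by (rule power_mono[OF z]) simp
    then show ?thesis by (simp only: power2_abs)
  qed
  also have "\<dots> = 1 / (2 * d\<^sup>2)" by (simp add: power2_eq_square)
  finally show ?thesis .
qed

lemma halfexp_near_one:
  assumes d: "d \<ge> 2" and y: "y \<in> {-1..1}"
  shows "\<bar>halfexp d y - 1\<bar> \<le> 1 / d"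
proof -
  have "\<bar>y / (2 * d)\<bar> \<le> 1 / (2 * d)" using d y by (auto simp: abs_div divide_simps)
  moreover have "1 / (2 * d\<^sup>2) + 1 / (2 * d) \<le> 1 / d"
    using d by (simp add: divide_simps power2_eq_square)
  ultimately show ?thesis using halfexp_expansion[OF d y] by linarith
qed

lemma vsol_bound:
  assumes d: "d \<ge> 2"
  shows "\<bar>vsol d x\<bar> \<le> 2"
proof -
  define u where "u = (THE u. green_map d u = u)"
  have vsol_u: "vsol d = apply_bcontfun u" by (simp add: vsol_def u_def)
  have vM: "\<bar>vsol d y\<bar> \<le> norm u" for y using norm_bounded[of u y] by (simp add: vsol_u)
  have "\<bar>source d (vsol d) y\<bar> \<le> 2 + 9 / 16 * norm u" if y: "y \<in> {-1..1}" for y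
  proof -
    have "9 / (8 * d) \<le> 9 / 16" using d by (simp add: divide_simps)
    then have "\<bar>potential d y\<bar> * \<bar>vsol d y\<bar> \<le> 9 / 16 * norm u"
      using potential_bound[OF d y] vM[of y] by (intro mult_mono) auto
    moreover have "\<bar>halfexp d y\<bar> \<le> 2"
    proof -
      have "1 / d \<le> 1 / 2" using d by (simp add: divide_simps)
      then show ?thesis using halfexp_near_one[OF d y] by (simp add: abs_le_iff)
    qed
    moreover have "\<bar>source d (vsol d) y\<bar> \<le> \<bar>- halfexp d y\<bar> + \<bar>potential d y * vsol d y\<bar>"
      unfolding source_def by (rule abs_triangle_ineq)
    ultimately show ?thesis by (simp add: abs_mult)
  qed
  then have "\<bar>vsol d y\<bar> \<le> (2 + 9 / 16 * norm u) / 2" for y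
    using vsol_eq_green_clip[OF d, of y] green_bound[OF source_vsol_continuous]
    by (simp add: clip_def)
  then have "norm u \<le> (2 + 9 / 16 * norm u) / 2" by (intro norm_bound) (simp add: vsol_u)
  then have "norm u \<le> 2" by simp
  then show ?thesis using vM[of x] by linarith
qed

lemma green_source_remainder:
  assumes d: "d \<ge> 2" and x: "x \<in> {-1..1}"
  shows "vsol d x = green (\<lambda>y. source d (vsol d) y + 1 + b * y) x - 1 / 2 - b * x / 6"
proof -
  have c: "continuous_on {-1..1} (\<lambda>y. source d (vsol d) y + 1 + b * y)"
    by (intro continuous_intros source_vsol_continuous)
  have "vsol d x = green (\<lambda>y. (source d (vsol d) y + 1 + b * y) + (- 1 + (- b) * y)) x"
    using vsol_eq_green[OF d x] by simp
  also have "\<dots> = green (\<lambda>y. source d (vsol d) y + 1 + b * y) x - 1 / 2 - b * x / 6"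
    by (subst green_add[OF c _ x])
      (auto intro!: continuous_intros simp: green_affine[OF x, of "- 1" "- b", simplified])
  finally show ?thesis .
qed

lemma vsol_first_order:
  assumes d: "d \<ge> 2" and x: "x \<in> {-1..1}"
  shows "\<bar>vsol d x + 1 / 2\<bar> \<le> 2 / d"
proof -
  let ?H = "\<lambda>y. source d (vsol d) y + 1 + 0 * y"
  have "\<bar>?H y\<bar> \<le> 4 / d" if y: "y \<in> {-1..1}" for y
  proof -
    have "\<bar>potential d y\<bar> * \<bar>vsol d y\<bar> \<le> 9 / (8 * d) * 2"
      using d by (intro mult_mono potential_bound[OF d y] vsol_bound) auto
    moreover have "\<bar>?H y\<bar> \<le> \<bar>halfexp d y - 1\<bar> + \<bar>potential d y * vsol d y\<bar>"
      unfolding source_def by simp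
    moreover have "1 / d + 9 / (8 * d) * 2 \<le> 4 / d" using d by (simp add: divide_simps)
    ultimately show ?thesis using halfexp_near_one[OF d y] by (simp add: abs_mult)
  qed
  moreover have "continuous_on {-1..1} ?H" by (intro continuous_intros source_vsol_continuous)
  ultimately have "\<bar>green ?H x\<bar> \<le> 4 / d / 2" using green_bound x by blast
  then show ?thesis using green_source_remainder[OF d x, of 0] by simp
qed

lemma abs_triangle_ineq3: "\<bar>- a + b - c\<bar> \<le> \<bar>a\<bar> + \<bar>b\<bar> + \<bar>c :: real\<bar>"
  by arith

lemma vsol_second_order:
  assumes d: "d \<ge> 2" and x: "x \<in> {-1..1}"
  shows "\<bar>vsol d x + 1 / 2 + x / (6 * d)\<bar> \<le> 3 / (2 * d\<^sup>2)"
proof -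
  let ?H = "\<lambda>y. source d (vsol d) y + 1 + 1 / d * y"
  have "\<bar>?H y\<bar> \<le> 3 / d\<^sup>2" if y: "y \<in> {-1..1}" for y
  proof -
    have y2: "0 \<le> 1 - y\<^sup>2" "1 - y\<^sup>2 \<le> 1" using y by (auto simp: abs_square_le_1)
    have eq: "?H y = - (halfexp d y - 1 - y / (2 * d)) + (y / d) * (vsol d y + 1 / 2)
        - (1 - y\<^sup>2) * vsol d y / (4 * d\<^sup>2)"
      using d by (simp add: source_def potential_def field_simps)
    have "\<bar>?H y\<bar> \<le> \<bar>halfexp d y - 1 - y / (2 * d)\<bar> + \<bar>(y / d) * (vsol d y + 1 / 2)\<bar>
        + \<bar>(1 - y\<^sup>2) * vsol d y / (4 * d\<^sup>2)\<bar>"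
      unfolding eq by (rule abs_triangle_ineq3)
    also have "\<dots> = \<bar>halfexp d y - 1 - y / (2 * d)\<bar> + \<bar>y\<bar> * \<bar>vsol d y + 1 / 2\<bar> / d
        + (1 - y\<^sup>2) * \<bar>vsol d y\<bar> / (4 * d\<^sup>2)"
      using d y2 by (simp add: abs_mult abs_div)
    also have "\<dots> \<le> 1 / (2 * d\<^sup>2) + 1 * (2 / d) / d + 1 * 2 / (4 * d\<^sup>2)"
      using d y y2 halfexp_expansion[OF d y] vsol_first_order[OF d y] vsol_bound[OF d, of y]
      by (intro add_mono divide_right_mono mult_mono) auto
    also have "\<dots> = 3 / d\<^sup>2" using d by (simp add: field_simps power2_eq_square)
    finally show ?thesis .
  qed
  moreover have "continuous_on {-1..1} ?H" by (intro continuous_intros source_vsol_continuous)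
  ultimately have "\<bar>green ?H x\<bar> \<le> 3 / d\<^sup>2 / 2" using green_bound x by blast
  then show ?thesis using green_source_remainder[OF d x, of "1 / d"] by simp
qed

(* hm d = hd d * Mfun d on (-1,1) (see hd_Mfun_eq_hm) and the two moments whose quotient is c2. *)
definition hm :: "real \<Rightarrow> real \<Rightarrow> real" where
  "hm d x = halfexp d x * vsol d x"

lemma hm_continuous: "continuous_on {-1..1} (hm d)"
  unfolding hm_def[abs_def] halfexp_def divide_inverse
  by (intro continuous_intros vsol_continuous)

lemma hm_expansion:
  assumes d: "d \<ge> 2" and x: "x \<in> {-1..1}"
  shows "\<bar>hm d x - (- 1 / 2 - 5 * x / (12 * d))\<bar> \<le> 3 / d\<^sup>2"
proof -
  define \<rho> where "\<rho> = halfexp d x - 1 - x / (2 * d)"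
  define E where "E = vsol d x + 1 / 2 + x / (6 * d)"
  have eq: "hm d x - (- 1 / 2 - 5 * x / (12 * d))
      = \<rho> * vsol d x + (1 + x / (2 * d)) * E - x\<^sup>2 / (12 * d\<^sup>2)"
    using d by (simp add: hm_def \<rho>_def E_def field_simps power2_eq_square)
  have "\<bar>\<rho> * vsol d x\<bar> \<le> 1 / (2 * d\<^sup>2) * 2"
    unfolding \<rho>_def abs_mult by (rule mult_mono[OF halfexp_expansion[OF d x] vsol_bound[OF d]]) auto
  moreover have "\<bar>(1 + x / (2 * d)) * E\<bar> \<le> 5 / 4 * (3 / (2 * d\<^sup>2))"
  proof -
    have "\<bar>x / (2 * d)\<bar> \<le> 1 / 4" using d x by (auto simp: abs_div divide_simps)
    then have "\<bar>1 + x / (2 * d)\<bar> \<le> 5 / 4" by linarith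
    then show ?thesis
      unfolding E_def abs_mult by (rule mult_mono[OF _ vsol_second_order[OF d x]]) auto
  qed
  moreover have "\<bar>x\<^sup>2 / (12 * d\<^sup>2)\<bar> \<le> 1 / (12 * d\<^sup>2)"
  proof -
    have "x\<^sup>2 \<le> 1" using x by (auto simp: abs_square_le_1)
    then show ?thesis by (simp add: divide_right_mono)
  qed
  moreover have "1 / (2 * d\<^sup>2) * 2 + 5 / 4 * (3 / (2 * d\<^sup>2)) + 1 / (12 * d\<^sup>2) \<le> 3 / d\<^sup>2"
    using d by (simp add: divide_simps)
  moreover have "\<bar>hm d x - (- 1 / 2 - 5 * x / (12 * d))\<bar>
      \<le> \<bar>\<rho> * vsol d x\<bar> + \<bar>(1 + x / (2 * d)) * E\<bar> + \<bar>x\<^sup>2 / (12 * d\<^sup>2)\<bar>"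
    unfolding eq by (rule abs_triangle_ineq3[of "- _", simplified])
  ultimately show ?thesis by linarith
qed

definition den :: "real \<Rightarrow> real" where
  "den d = integral {-1..1} (\<lambda>x. (1 - x\<^sup>2) * hm d x)"

definition num :: "real \<Rightarrow> real" where
  "num d = integral {-1..1} (\<lambda>x. x * (1 - x\<^sup>2) * hm d x)"

lemma weight_moments:
  fixes a b :: real
  shows "((\<lambda>x. (1 - x\<^sup>2) * (a + b * x)) has_integral 4 * a / 3) {-1..1}"
    and "((\<lambda>x. x * (1 - x\<^sup>2) * (a + b * x)) has_integral 4 * b / 15) {-1..1}"
proof -
  define F where "F x = a * (x - x ^ 3 / 3) + b * (x\<^sup>2 / 2 - x ^ 4 / 4)" for x :: real
  define G where "G x = a * (x\<^sup>2 / 2 - x ^ 4 / 4) + b * (x ^ 3 / 3 - x ^ 5 / 5)" for x :: real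
  have "((\<lambda>x. (1 - x\<^sup>2) * (a + b * x)) has_integral F 1 - F (-1)) {-1..1}"
    unfolding F_def by (rule fundamental_theorem_real)
      (auto intro!: derivative_eq_intros simp: power2_eq_square power3_eq_cube
        eval_nat_numeral field_simps)
  then show "((\<lambda>x. (1 - x\<^sup>2) * (a + b * x)) has_integral 4 * a / 3) {-1..1}"
    by (simp add: F_def)
  have "((\<lambda>x. x * (1 - x\<^sup>2) * (a + b * x)) has_integral G 1 - G (-1)) {-1..1}"
    unfolding G_def by (rule fundamental_theorem_real)
      (auto intro!: derivative_eq_intros simp: power2_eq_square power3_eq_cube
        eval_nat_numeral field_simps)
  then show "((\<lambda>x. x * (1 - x\<^sup>2) * (a + b * x)) has_integral 4 * b / 15) {-1..1}"
    by (simp add: G_def)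
qed

lemma weighted_integral_error:
  fixes k \<psi> :: "real \<Rightarrow> real"
  assumes k: "continuous_on {-1..1} k" "\<And>x. x \<in> {-1..1} \<Longrightarrow> \<bar>k x\<bar> \<le> 1 - x\<^sup>2"
    and \<psi>: "continuous_on {-1..1} \<psi>" "\<And>x. x \<in> {-1..1} \<Longrightarrow> \<bar>\<psi> x\<bar> \<le> \<epsilon>"
  shows "\<bar>integral {-1..1} (\<lambda>x. k x * \<psi> x)\<bar> \<le> 4 / 3 * \<epsilon>"
proof -
  have w: "((\<lambda>x. (1 - x\<^sup>2) * \<epsilon>) has_integral 4 / 3 * \<epsilon>) {-1..1}"
    using weight_moments(1)[of \<epsilon> 0] by simp
  have "\<bar>integral {-1..1} (\<lambda>x. k x * \<psi> x)\<bar> \<le> integral {-1..1} (\<lambda>x. (1 - x\<^sup>2) * \<epsilon>)"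
  proof (rule integral_norm_bound_integral[where 'a=real, simplified])
    show "(\<lambda>x. k x * \<psi> x) integrable_on {-1..1}"
      by (intro integrable_continuous_interval continuous_intros k \<psi>)
    show "(\<lambda>x. (1 - x\<^sup>2) * \<epsilon>) integrable_on {-1..1}" using w by blast
    show "\<bar>k x * \<psi> x\<bar> \<le> (1 - x\<^sup>2) * \<epsilon>" if "x \<in> {-1..1}" for x
      unfolding abs_mult using k(2)[OF that] \<psi>(2)[OF that] by (auto intro: mult_mono)
  qed
  also have "\<dots> = 4 / 3 * \<epsilon>" using w by (rule integral_unique)
  finally show ?thesis .
qed

lemma integral_hm_approx:
  assumes d: "d \<ge> 2"
    and k: "continuous_on {-1..1} k" "\<And>x. x \<in> {-1..1} \<Longrightarrow> \<bar>k x\<bar> \<le> 1 - x\<^sup>2"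
    and I: "((\<lambda>x. k x * (- 1 / 2 + (- 5 / (12 * d)) * x)) has_integral I) {-1..1}"
  shows "\<bar>integral {-1..1} (\<lambda>x. k x * hm d x) - I\<bar> \<le> 4 / d\<^sup>2"
proof -
  define \<psi> where "\<psi> x = hm d x - (- 1 / 2 + (- 5 / (12 * d)) * x)" for x
  have \<psi>c: "continuous_on {-1..1} \<psi>"
    unfolding \<psi>_def by (intro continuous_intros hm_continuous)
  have "integral {-1..1} (\<lambda>x. k x * hm d x)
      = integral {-1..1} (\<lambda>x. k x * (- 1 / 2 + (- 5 / (12 * d)) * x) + k x * \<psi> x)"
    by (simp add: \<psi>_def algebra_simps)
  also have "\<dots> = I + integral {-1..1} (\<lambda>x. k x * \<psi> x)"
  proof -
    have "(\<lambda>x. k x * \<psi> x) integrable_on {-1..1}"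
      by (intro integrable_continuous_interval continuous_intros k \<psi>c)
    from integral_add[OF has_integral_integrable[OF I] this] show ?thesis
      unfolding integral_unique[OF I] .
  qed
  finally have "integral {-1..1} (\<lambda>x. k x * hm d x) - I = integral {-1..1} (\<lambda>x. k x * \<psi> x)"
    by simp
  also have "\<bar>\<dots>\<bar> \<le> 4 / 3 * (3 / d\<^sup>2)"
  proof (rule weighted_integral_error[OF k \<psi>c])
    show "\<bar>\<psi> x\<bar> \<le> 3 / d\<^sup>2" if "x \<in> {-1..1}" for x
      using hm_expansion[OF d that] by (simp add: \<psi>_def)
  qed
  finally show ?thesis by simp
qed

lemma den_expansion:
  assumes d: "d \<ge> 2"
  shows "\<bar>den d + 2 / 3\<bar> \<le> 4 / d\<^sup>2"
proof -
  have "\<bar>integral {-1..1} (\<lambda>x. (1 - x\<^sup>2) * hm d x) - 4 * (- 1 / 2) / 3\<bar> \<le> 4 / d\<^sup>2"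
    by (rule integral_hm_approx[OF d _ _ weight_moments(1)])
      (auto intro!: continuous_intros simp: abs_square_le_1)
  then show ?thesis by (simp add: den_def)
qed

lemma num_expansion:
  assumes d: "d \<ge> 2"
  shows "\<bar>num d + 1 / (9 * d)\<bar> \<le> 4 / d\<^sup>2"
proof -
  have "\<bar>integral {-1..1} (\<lambda>x. x * (1 - x\<^sup>2) * hm d x) - 4 * (- 5 / (12 * d)) / 15\<bar> \<le> 4 / d\<^sup>2"
  proof (rule integral_hm_approx[OF d _ _ weight_moments(2)])
    show "\<bar>x * (1 - x\<^sup>2)\<bar> \<le> 1 - x\<^sup>2" if "x \<in> {-1..1}" for x :: real
    proof -
      have "0 \<le> 1 - x\<^sup>2" "\<bar>x\<bar> \<le> 1" using that by (auto simp: abs_square_le_1)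
      then show ?thesis using mult_right_mono[of "\<bar>x\<bar>" 1 "1 - x\<^sup>2"] by (simp add: abs_mult)
    qed
  qed (auto intro!: continuous_intros)
  moreover have "4 * (- 5 / (12 * d)) / 15 = - (1 / (9 * d))" using d by (simp add: field_simps)
  ultimately show ?thesis by (simp add: num_def)
qed

lemma gd_eq_gsol:
  assumes d: "d \<ge> 2"
  shows "gd d = gsol d"
  unfolding gd_def
proof (rule the_equality)
  show "is_gd d (gsol d)" by (rule gsol_is_gd[OF d])
  show "g = gsol d" if "is_gd d g" for g by (rule is_gd_unique[OF that gsol_is_gd[OF d]])
qed

lemma hd_Mfun_eq_hm:
  assumes d: "d \<ge> 2" and x: "x \<in> {-1<..<1}"
  shows "hd d x * Mfun d x = hm d x"
proof -
  have "sqrt (1 - x\<^sup>2) > 0" using one_minus_square_pos[OF x] by simp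
  moreover have "halfexp d x > 0" by (simp add: halfexp_def)
  ultimately show ?thesis
    unfolding hd_def Mfun_def gd_eq_gsol[OF d] gsol_def halfexp_inverse[of x d]
      halfexp_square[of d x, symmetric] hm_def
    using x by (simp add: field_simps)
qed

lemma integral_cos_substitution:
  assumes f: "continuous_on {-1..1} f"
  shows "integral {0..pi} (\<lambda>t. sin t * f (cos t)) = integral {-1..1} f"
proof -
  have f': "continuous_on {-1..1} (\<lambda>x. f (- x))" by (rule continuous_on_reflect[OF f])
  have "((\<lambda>t. sin t *\<^sub>R (\<lambda>x. f (- x)) (- cos t)) has_integral
      integral {- cos 0..- cos pi} (\<lambda>x. f (- x))) {0..pi}"
    by (rule has_integral_substitution[where c = "-1" and d = 1, OF _ _ _ f'])
      (auto intro!: derivative_eq_intros)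
  then have "((\<lambda>t. sin t * f (cos t)) has_integral integral {-1..1} (\<lambda>x. f (- x))) {0..pi}"
    by simp
  moreover have "integral {-1..1} (\<lambda>x. f (- x)) = integral {-1..1} f"
    using Henstock_Kurzweil_Integration.integral_reflect_real[of 1 "-1" f] by simp
  ultimately show ?thesis by (simp add: integral_unique)
qed

lemma c2_eq_num_den:
  assumes d: "d \<ge> 2"
  shows "c2 d = num d / den d"
proof -
  have pointwise: "(sin t)\<^sup>2 * hd d (cos t) * Mfun d (cos t) * sin t
      = sin t * ((1 - (cos t)\<^sup>2) * hm d (cos t))" if t: "t \<in> {0..pi}" for t
  proof (cases "sin t = 0")
    case False
    then have "sin t > 0" using t sin_ge_zero[of t] by auto
    then have "(cos t)\<^sup>2 < 1" by (simp add: cos_squared_eq)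
    then have "cos t \<in> {-1<..<1}" by (simp add: abs_square_less_1 abs_less_iff)
    then have "hd d (cos t) * Mfun d (cos t) = hm d (cos t)" by (rule hd_Mfun_eq_hm[OF d])
    moreover have "(sin t)\<^sup>2 * hd d (cos t) * Mfun d (cos t) * sin t
        = sin t * ((sin t)\<^sup>2 * (hd d (cos t) * Mfun d (cos t)))" by (simp add: mult_ac)
    ultimately show ?thesis by (simp add: sin_squared_eq)
  qed simp
  have "integral {0..pi} (\<lambda>t. cos t * (sin t)\<^sup>2 * hd d (cos t) * Mfun d (cos t) * sin t)
      = integral {0..pi} (\<lambda>t. sin t * (cos t * (1 - (cos t)\<^sup>2) * hm d (cos t)))"
    by (rule integral_cong) (use pointwise in \<open>simp add: mult_ac\<close>)
  also have "\<dots> = num d"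
    unfolding num_def by (intro integral_cos_substitution continuous_intros hm_continuous)
  finally have N: "integral {0..pi} (\<lambda>t. cos t * (sin t)\<^sup>2 * hd d (cos t) * Mfun d (cos t) * sin t)
      = num d" .
  have "integral {0..pi} (\<lambda>t. (sin t)\<^sup>2 * hd d (cos t) * Mfun d (cos t) * sin t)
      = integral {0..pi} (\<lambda>t. sin t * ((1 - (cos t)\<^sup>2) * hm d (cos t)))"
    by (rule integral_cong) (rule pointwise)
  also have "\<dots> = den d"
    unfolding den_def by (intro integral_cos_substitution continuous_intros hm_continuous)
  finally show ?thesis unfolding c2_def N by simp
qed

lemma tendsto_at_top_of_error_bound:
  fixes f :: "real \<Rightarrow> real"
  assumes "eventually (\<lambda>d. \<bar>f d - L\<bar> \<le> C / d) at_top"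
  shows "(f \<longlongrightarrow> L) at_top"
proof -
  have "((\<lambda>d. C / d) \<longlongrightarrow> 0) at_top"
    by (rule tendsto_divide_0[OF tendsto_const filterlim_at_top_imp_at_infinity[OF filterlim_ident]])
  then have "((\<lambda>d. f d - L) \<longlongrightarrow> 0) at_top"
    by (rule Lim_null_comparison[rotated]) (use assms in simp)
  then show ?thesis by (simp add: LIM_zero_iff)
qed

lemma den_tendsto: "(den \<longlongrightarrow> - 2 / 3) at_top"
proof (rule tendsto_at_top_of_error_bound)
  show "eventually (\<lambda>d. \<bar>den d - - 2 / 3\<bar> \<le> 2 / d) at_top"
    using eventually_ge_at_top[of "2 :: real"]
  proof eventually_elim
    case (elim d)
    have "4 / d\<^sup>2 \<le> 2 / d" using elim by (simp add: divide_simps power2_eq_square)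
    then show ?case using den_expansion[OF elim] by simp
  qed
qed

lemma scaled_num_tendsto: "((\<lambda>d. d * num d) \<longlongrightarrow> - 1 / 9) at_top"
proof (rule tendsto_at_top_of_error_bound)
  show "eventually (\<lambda>d. \<bar>d * num d - - 1 / 9\<bar> \<le> 4 / d) at_top"
    using eventually_ge_at_top[of "2 :: real"]
  proof eventually_elim
    case (elim d)
    have "\<bar>d * num d - - 1 / 9\<bar> = d * \<bar>num d + 1 / (9 * d)\<bar>"
      using elim by (simp add: abs_mult field_simps)
    also have "\<dots> \<le> d * (4 / d\<^sup>2)"
      using num_expansion[OF elim] elim by (intro mult_left_mono) auto
    also have "\<dots> = 4 / d" by (simp add: power2_eq_square)
    finally show ?case .
  qed
qed

(* Main theorem: (c2 d - 1/(6d)) / (1/d) = d * num d / den d - 1/6 tends to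
   (-1/9) / (-2/3) - 1/6 = 0. *)
theorem propositionA2:
  shows "(\<lambda>d. c2 d - 1 / (6 * d)) \<in> smallo at_top (\<lambda>d. 1 / d)"
proof (rule smalloI_tendsto)
  have "((\<lambda>d. d * num d / den d - 1 / 6) \<longlongrightarrow> (- 1 / 9) / (- 2 / 3) - 1 / 6) at_top"
    by (intro tendsto_intros scaled_num_tendsto den_tendsto) simp
  then have "((\<lambda>d. d * num d / den d - 1 / 6) \<longlongrightarrow> 0) at_top" by simp
  then show "((\<lambda>d. (c2 d - 1 / (6 * d)) / (1 / d)) \<longlongrightarrow> 0) at_top"
  proof (rule Lim_transform_eventually)
    show "\<forall>\<^sub>F d in at_top. d * num d / den d - 1 / 6 = (c2 d - 1 / (6 * d)) / (1 / d)"
      using eventually_ge_at_top[of "2 :: real"]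
      by eventually_elim (simp add: c2_eq_num_den field_simps)
  qed
  show "\<forall>\<^sub>F d in at_top. 1 / d \<noteq> (0 :: real)"
    using eventually_gt_at_top[of "0 :: real"] by eventually_elim simp
qed

end
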